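(* Let $\delta>0$ and $\alpha\in(0,2)$. Assume in addition that $V\in C^1(\mathbb R^d)$ with $\sup_{x\in\mathbb R^d}|\nabla V(x)|<\delta$. If there is $C_1>0$ such that for all $f\in C_b^\infty(\mathbb R^d)$, $$\int\big(f(x)-\mu_{2V}(f)\big)^2\mu_{2V}(dx)\le C_1\iint\frac{(f(y)-f(x))^2}{|y-x|^{d+\alpha}}e^{-\delta|y-x|}e^{-V(y)}dy\,e^{-V(x)}dx,$$ then there is $\lambda_0>0$ with $\int e^{\lambda_0|x|}\mu_{2V}(dx)<\infty$.
   Context: Let $d\ge1$. $V:\mathbb R^d\to\mathbb R$ is a locally bounded measurable function such that $e^{-V}$ is bounded and $\int e^{-V(x)}dx<\infty$. $\mu_{2V}(dx):=\frac{e^{-2V(x)}}{\int e^{-2V(y)}dy}dx$, $\mu_{2V}(f)=\int f\,d\mu_{2V}$. $C_b^\infty$ denotes smooth functions bounded with all derivatives. *)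

theory Defs
  imports "HOL-Analysis.Analysis"
begin

definition pderiv_dir :: "'a::euclidean_space \<Rightarrow> ('a \<Rightarrow> real) \<Rightarrow> 'a \<Rightarrow> real" where
  "pderiv_dir v g = (\<lambda>x. frechet_derivative g (at x) v)"

fun iter_pderiv :: "'a::euclidean_space list \<Rightarrow> ('a \<Rightarrow> real) \<Rightarrow> 'a \<Rightarrow> real" where
  "iter_pderiv [] g = g"
| "iter_pderiv (v # vs) g = pderiv_dir v (iter_pderiv vs g)"

definition Cb_inf :: "('a::euclidean_space \<Rightarrow> real) \<Rightarrow> bool" where
  "Cb_inf f \<longleftrightarrow> (\<forall>vs. set vs \<subseteq> Basis \<longrightarrow>
      (\<forall>x. iter_pderiv vs f differentiable (at x)) \<and> bounded (range (iter_pderiv vs f)))"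

definition locally_bounded :: "('a::euclidean_space \<Rightarrow> real) \<Rightarrow> bool" where
  "locally_bounded V \<longleftrightarrow> (\<forall>K. compact K \<longrightarrow> bounded (V ` K))"

definition mu2V :: "('a::euclidean_space \<Rightarrow> real) \<Rightarrow> 'a measure" where
  "mu2V V = density lborel
     (\<lambda>x. ennreal (exp (-2 * V x) / (\<integral>y. exp (-2 * V y) \<partial>lborel)))"

end

theory Submission
  imports Defs "HOL-Computational_Algebra.Polynomial" "HOL-Real_Asymp.Real_Asymp"
    "HOL-Probability.Probability_Measure"
begin

text \<open>Test the Poincare inequality with the bounded smooth functions
  f(x) = exp (a u\<bullet>x) / (1 + \<epsilon> exp (a u\<bullet>x)) for unit vectors u. They satisfy
  |f(y) - f(x)| \<le> a |y - x| exp (a |y - x|) f(x), and the gradient bound gives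
  exp (-V(y)) \<le> exp (-V(x)) exp (c |y - x|) with c < \<delta>. Hence for 4 a \<le> \<delta> - c the jump energy
  of f is at most a^2 J \<integral> f^2 exp (-2V), where J = \<integral> |z|^(2-d-\<alpha>) exp (-(\<delta>-c)|z|/2) dz is finite
  because \<alpha> < 2. For small a the Poincare inequality then reads Var f \<le> E f^2 / 2, i.e.
  E f^2 \<le> 2 (E f)^2. This reverse Cauchy-Schwarz inequality forbids f to carry its mass on a
  set of small probability; as f \<le> exp (a R) off the small set {u\<bullet>x > R}, E f^2 is bounded
  uniformly in \<epsilon>, and Fatou's lemma as \<epsilon> \<rightarrow> 0 gives \<integral> exp (2 a u\<bullet>x) d\<mu> < \<infinity>. Summing over
  the directions \<plusminus>e_i bounds exp (2 a |x| / d).\<close>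

section \<open>Smooth saturated exponentials\<close>

lemma has_derivative_ridge:
  fixes G :: "nat \<Rightarrow> real \<Rightarrow> real" and u :: "'a::real_inner"
  assumes "\<And>n t. (G n has_real_derivative G (Suc n) t) (at t)"
  shows "((\<lambda>x. c * G n (u \<bullet> x)) has_derivative (\<lambda>h. c * (G (Suc n) (u \<bullet> x) * (u \<bullet> h)))) (at x)"
proof -
  have "((\<lambda>x. G n (u \<bullet> x)) has_derivative (\<lambda>h. G (Suc n) (u \<bullet> x) * (u \<bullet> h))) (at x)"
    using has_derivative_compose[OF bounded_linear.has_derivative[OF bounded_linear_inner_right,
          OF has_derivative_ident] assms[unfolded has_field_derivative_def]]
    by (simp add: o_def mult.commute)
  then show ?thesis by (rule has_derivative_mult_right)
qed

lemma iter_pderiv_ridge: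
  fixes G :: "nat \<Rightarrow> real \<Rightarrow> real" and u :: "'a::euclidean_space"
  assumes "\<And>n t. (G n has_real_derivative G (Suc n) t) (at t)"
  shows "iter_pderiv vs (\<lambda>x. G 0 (u \<bullet> x))
    = (\<lambda>x. prod_list (map ((\<bullet>) u) vs) * G (length vs) (u \<bullet> x))"
proof (induction vs)
  case (Cons v vs)
  show ?case
    using frechet_derivative_at[OF has_derivative_ridge[where G=G and c="prod_list (map ((\<bullet>) u) vs)"
          and n="length vs" and u=u, OF assms]]
    by (simp add: Cons.IH pderiv_dir_def fun_eq_iff algebra_simps)
qed simp

lemma Cb_inf_ridge:
  fixes G :: "nat \<Rightarrow> real \<Rightarrow> real" and u :: "'a::euclidean_space"
  assumes deriv: "\<And>n t. (G n has_real_derivative G (Suc n) t) (at t)"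
    and bdd: "\<And>n. bounded (range (G n))"
  shows "Cb_inf (\<lambda>x. G 0 (u \<bullet> x))"
  unfolding Cb_inf_def iter_pderiv_ridge[where G=G, OF deriv]
proof (intro allI impI conjI)
  fix vs :: "'a list" and x
  show "(\<lambda>x. prod_list (map ((\<bullet>) u) vs) * G (length vs) (u \<bullet> x)) differentiable at x"
    using has_derivative_ridge[where G=G, OF deriv] unfolding differentiable_def by blast
next
  fix vs :: "'a list"
  obtain B where "\<And>t. \<bar>G (length vs) t\<bar> \<le> B" using bdd unfolding bounded_iff by fastforce
  then show "bounded (range (\<lambda>x. prod_list (map ((\<bullet>) u) vs) * G (length vs) (u \<bullet> x)))"
    unfolding bounded_iff
    by (intro exI[of _ "\<bar>prod_list (map ((\<bullet>) u) vs)\<bar> * B"]) (auto simp: abs_mult intro: mult_left_mono)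
qed

definition logistic :: "real \<Rightarrow> real" where
  "logistic w = exp w / (1 + exp w)"

lemma logistic_bounds: "0 \<le> logistic w" "logistic w \<le> 1"
  unfolding logistic_def by (auto simp: add_pos_nonneg)

lemma logistic_has_real_derivative:
  "(logistic has_real_derivative logistic w * (1 - logistic w)) (at w)"
proof -
  have "1 + exp w \<noteq> 0" by (smt (verit) exp_gt_zero)
  then show ?thesis
    unfolding logistic_def
    by (auto intro!: derivative_eq_intros simp: power2_eq_square field_simps)
qed

definition sat_exp :: "real \<Rightarrow> real \<Rightarrow> real" where
  "sat_exp \<epsilon> s = exp s / (1 + \<epsilon> * exp s)"

text \<open>For \<open>\<epsilon> > 0\<close>, \<open>t \<mapsto> sat_exp \<epsilon> (a * t)\<close> is \<open>\<epsilon>\<^sup>-\<^sup>1\<close> times the logistic function of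
  \<open>a * t + ln \<epsilon>\<close>; since the logistic function \<open>\<sigma>\<close> solves \<open>\<sigma>' = \<sigma> (1 - \<sigma>)\<close>, all its derivatives
  are polynomials in \<open>\<sigma>\<close> and hence bounded.\<close>

fun sat_exp_deriv_poly :: "real \<Rightarrow> real \<Rightarrow> nat \<Rightarrow> real poly" where
  "sat_exp_deriv_poly \<epsilon> a 0 = [:0, 1 / \<epsilon>:]"
| "sat_exp_deriv_poly \<epsilon> a (Suc n) = smult a (pderiv (sat_exp_deriv_poly \<epsilon> a n) * [:0, 1, -1:])"

definition sat_exp_deriv :: "real \<Rightarrow> real \<Rightarrow> nat \<Rightarrow> real \<Rightarrow> real" where
  "sat_exp_deriv \<epsilon> a n t = poly (sat_exp_deriv_poly \<epsilon> a n) (logistic (a * t + ln \<epsilon>))"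

lemma sat_exp_deriv_0: "\<epsilon> > 0 \<Longrightarrow> sat_exp_deriv \<epsilon> a 0 t = sat_exp \<epsilon> (a * t)"
  by (simp add: sat_exp_deriv_def logistic_def sat_exp_def exp_add field_simps)

lemma sat_exp_deriv_has_real_derivative:
  "(sat_exp_deriv \<epsilon> a n has_real_derivative sat_exp_deriv \<epsilon> a (Suc n) t) (at t)"
proof -
  define P where "P = sat_exp_deriv_poly \<epsilon> a n"
  define \<sigma> where "\<sigma> = logistic (a * t + ln \<epsilon>)"
  have "((\<lambda>t. logistic (a * t + ln \<epsilon>)) has_real_derivative \<sigma> * (1 - \<sigma>) * a) (at t)"
    unfolding \<sigma>_def
    by (rule DERIV_chain2[OF logistic_has_real_derivative]) (auto intro!: derivative_eq_intros)
  then have "((\<lambda>t. poly P (logistic (a * t + ln \<epsilon>))) has_real_derivative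
      poly (pderiv P) \<sigma> * (\<sigma> * (1 - \<sigma>) * a)) (at t)"
    unfolding \<sigma>_def by (rule DERIV_chain2[OF poly_DERIV])
  moreover have "poly (pderiv P) \<sigma> * (\<sigma> * (1 - \<sigma>) * a) = sat_exp_deriv \<epsilon> a (Suc n) t"
    by (simp add: sat_exp_deriv_def P_def \<sigma>_def algebra_simps)
  ultimately show ?thesis
    unfolding sat_exp_deriv_def[abs_def] P_def by simp
qed

lemma bounded_range_sat_exp_deriv: "bounded (range (sat_exp_deriv \<epsilon> a n))"
proof -
  have "compact (poly (sat_exp_deriv_poly \<epsilon> a n) ` {0..1})"
    by (intro compact_continuous_image continuous_intros) auto
  moreover have "range (sat_exp_deriv \<epsilon> a n) \<subseteq> poly (sat_exp_deriv_poly \<epsilon> a n) ` {0..1}"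
    using logistic_bounds by (auto simp: sat_exp_deriv_def)
  ultimately show ?thesis by (meson bounded_subset compact_imp_bounded)
qed

lemma Cb_inf_sat_exp:
  fixes u :: "'a::euclidean_space"
  assumes "\<epsilon> > 0"
  shows "Cb_inf (\<lambda>x. sat_exp \<epsilon> (a * (u \<bullet> x)))"
  using Cb_inf_ridge[of "sat_exp_deriv \<epsilon> a" u, OF sat_exp_deriv_has_real_derivative
      bounded_range_sat_exp_deriv]
  by (simp add: sat_exp_deriv_0[OF assms])

lemma sat_exp_pos: "\<epsilon> \<ge> 0 \<Longrightarrow> sat_exp \<epsilon> s > 0"
  unfolding sat_exp_def by (simp add: add_pos_nonneg)

lemma sat_exp_le_inverse: "\<epsilon> > 0 \<Longrightarrow> sat_exp \<epsilon> s \<le> 1 / \<epsilon>"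
  unfolding sat_exp_def by (simp add: field_simps add_pos_nonneg)

lemma sat_exp_le_exp: "\<epsilon> \<ge> 0 \<Longrightarrow> sat_exp \<epsilon> s \<le> exp s"
  unfolding sat_exp_def by (simp add: field_simps add_pos_nonneg)

lemma sat_exp_eq_inverse: "sat_exp \<epsilon> s = inverse (exp (- s) + \<epsilon>)"
  unfolding sat_exp_def by (simp add: exp_minus field_simps)

lemma sat_exp_mono: "\<epsilon> \<ge> 0 \<Longrightarrow> s \<le> t \<Longrightarrow> sat_exp \<epsilon> s \<le> sat_exp \<epsilon> t"
  unfolding sat_exp_eq_inverse by (intro le_imp_inverse_le add_right_mono) (auto intro: add_pos_nonneg)

lemma sat_exp_le_exp_diff: "\<epsilon> \<ge> 0 \<Longrightarrow> s \<le> t \<Longrightarrow> sat_exp \<epsilon> t \<le> exp (t - s) * sat_exp \<epsilon> s"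
  unfolding sat_exp_def
  by (simp add: field_simps add_pos_nonneg exp_diff) (intro mult_left_mono mult_right_mono; simp)

lemma sat_exp_diff_le:
  assumes "\<epsilon> \<ge> 0"
  shows "\<bar>sat_exp \<epsilon> s - sat_exp \<epsilon> t\<bar> \<le> sat_exp \<epsilon> t * (exp \<bar>s - t\<bar> - 1)"
proof (cases "t \<le> s")
  case True
  then show ?thesis
    using sat_exp_mono[OF assms True] sat_exp_le_exp_diff[OF assms True]
    by (simp add: algebra_simps)
next
  case False
  then have "s \<le> t" by simp
  have "1 - exp (s - t) \<le> exp (t - s) - 1"
    using exp_ge_add_one_self[of "s - t"] exp_ge_add_one_self[of "t - s"] by linarith
  moreover have "sat_exp \<epsilon> t - sat_exp \<epsilon> s \<le> sat_exp \<epsilon> t * (1 - exp (s - t))"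
    using sat_exp_le_exp_diff[OF assms \<open>s \<le> t\<close>] by (simp add: exp_diff field_simps)
  ultimately show ?thesis
    using sat_exp_mono[OF assms \<open>s \<le> t\<close>] sat_exp_pos[OF assms, of t] False
    by (smt (verit) mult_left_mono)
qed

section \<open>Integrability of the tempered radial kernel\<close>

lemma suminf_dyadic_balls_finite:
  fixes \<gamma> :: real
  assumes "\<gamma> < real DIM('a::euclidean_space)"
  shows "(\<Sum>n. ennreal (2 powr ((real n + 1) * \<gamma>)) * emeasure lborel (cball (0::'a) (2 powr - real n)))
    < \<infinity>"
proof -
  define d where "d = real DIM('a)"
  define U where "U = unit_ball_vol d"
  have "ennreal (2 powr ((real n + 1) * \<gamma>)) * emeasure lborel (cball (0::'a) (2 powr - real n))
      = ennreal (2 powr \<gamma> * U * (2 powr (\<gamma> - d)) ^ n)" for n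
  proof -
    have "ennreal (2 powr ((real n + 1) * \<gamma>)) * emeasure lborel (cball (0::'a) (2 powr - real n))
        = ennreal (2 powr ((real n + 1) * \<gamma>) * (U * (2 powr - real n) ^ DIM('a)))"
      by (simp add: emeasure_cball U_def d_def ennreal_mult)
    also have "2 powr ((real n + 1) * \<gamma>) * (U * (2 powr - real n) ^ DIM('a))
        = 2 powr \<gamma> * U * (2 powr (\<gamma> - d)) ^ n"
      by (simp add: d_def powr_power powr_add [symmetric] algebra_simps)
    finally show ?thesis .
  qed
  moreover have "summable (\<lambda>n. 2 powr \<gamma> * U * (2 powr (\<gamma> - d)) ^ n)"
    using assms powr_less_mono[of "\<gamma> - d" 0 2] by (intro summable_mult summable_geometric) (simp add: d_def)
  then have "(\<Sum>n. ennreal (2 powr \<gamma> * U * (2 powr (\<gamma> - d)) ^ n)) \<noteq> top"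
    by (rule ennreal_suminf_neq_top) (simp add: U_def d_def)
  ultimately show ?thesis by (simp add: less_top[symmetric])
qed

lemma suminf_integer_balls_finite:
  fixes k \<gamma> :: real
  assumes "k > 0"
  shows "(\<Sum>m. ennreal ((real m + 2) powr \<gamma> * exp (- k * (real m + 1)))
      * emeasure lborel (cball (0::'a::euclidean_space) (real m + 2))) < \<infinity>"
proof -
  define U where "U = unit_ball_vol (real DIM('a))"
  define b where "b m = (real m + 2) powr \<gamma> * exp (- k * (real m + 1)) * (U * (real m + 2) ^ DIM('a))"
    for m :: nat
  have "b \<in> O(\<lambda>m. exp (- k / 2) ^ m)"
    unfolding b_def using assms by real_asymp
  then have "summable b"
    using assms by (intro summable_comparison_test_bigo[OF _ \<open>b \<in> _\<close>]) (simp add: summable_geometric)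
  moreover have "b m \<ge> 0" for m
    by (simp add: b_def U_def)
  ultimately have "(\<Sum>m. ennreal (b m)) < \<infinity>"
    by (simp add: less_top[symmetric] ennreal_suminf_neq_top)
  moreover have "ennreal ((real m + 2) powr \<gamma> * exp (- k * (real m + 1)))
      * emeasure lborel (cball (0::'a) (real m + 2)) = ennreal (b m)" for m
    by (simp add: emeasure_cball U_def b_def ennreal_mult)
  ultimately show ?thesis by simp
qed

lemma ennreal_le_suminf: "(f::nat \<Rightarrow> ennreal) n \<le> suminf f"
  using sum_le_suminf[OF summableI, of "{n}" f] by simp

lemma nn_integral_suminf_cmult_indicator:
  assumes [measurable]: "\<And>n. A n \<in> sets M"
  shows "(\<integral>\<^sup>+ z. (\<Sum>n. (c n :: ennreal) * indicator (A n) z) \<partial>M) = (\<Sum>n. c n * emeasure M (A n))"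
  by (subst nn_integral_suminf) (auto intro!: suminf_cong nn_integral_cmult_indicator)

lemma borel_measurable_suminf_cmult_indicator:
  assumes "\<And>n. A n \<in> sets M"
  shows "(\<lambda>z. \<Sum>n. (c n :: ennreal) * indicator (A n) z) \<in> borel_measurable M"
  using assms by measurable

lemma norm_powr_exp_le_dyadic_ball_series:
  fixes z :: "'a::real_normed_vector" and e k :: real
  assumes "k > 0" "norm z \<le> 1"
  shows "ennreal (norm z powr e * exp (- k * norm z))
    \<le> (\<Sum>n. ennreal (2 powr ((real n + 1) * max 0 (- e))) * indicator (cball 0 (2 powr - real n)) z)"
proof (cases "z = 0")
  case False
  define r where "r = norm z"
  define L where "L = - log 2 r"
  define n where "n = nat \<lfloor>L\<rfloor>"
  have "0 < r" "r \<le> 1"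
    using False assms(2) by (simp_all add: r_def)
  then have "L \<ge> 0" "r = 2 powr - L"
    by (auto simp: L_def)
  moreover have "real n \<le> L" "L \<le> real n + 1"
    using \<open>L \<ge> 0\<close> unfolding n_def by linarith+
  ultimately have "r \<le> 2 powr - real n" "1 / r \<le> 2 powr (real n + 1)"
    by (simp_all add: powr_minus_divide[symmetric] powr_mono)
  have "r powr e \<le> r powr - max 0 (- e)"
    using \<open>0 < r\<close> \<open>r \<le> 1\<close> by (intro powr_mono') auto
  also have "\<dots> = (1 / r) powr max 0 (- e)"
    using \<open>0 < r\<close> by (simp add: powr_minus_divide powr_divide)
  also have "\<dots> \<le> (2 powr (real n + 1)) powr max 0 (- e)"
    using \<open>0 < r\<close> \<open>1 / r \<le> _\<close> by (intro powr_mono2) auto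
  finally have "r powr e \<le> 2 powr ((real n + 1) * max 0 (- e))"
    by (simp add: powr_powr)
  moreover have "r powr e * exp (- k * r) \<le> r powr e"
    using \<open>0 < r\<close> assms(1) by (intro mult_left_le) auto
  ultimately have "ennreal (r powr e * exp (- k * r))
      \<le> ennreal (2 powr ((real n + 1) * max 0 (- e))) * indicator (cball 0 (2 powr - real n)) z"
    using \<open>r \<le> 2 powr - real n\<close> by (simp add: r_def)
  also have "\<dots> \<le> (\<Sum>n. ennreal (2 powr ((real n + 1) * max 0 (- e))) * indicator (cball 0 (2 powr - real n)) z)"
    by (rule ennreal_le_suminf)
  finally show ?thesis
    by (simp add: r_def)
qed simp

lemma norm_powr_exp_le_integer_ball_series:
  fixes z :: "'a::real_normed_vector" and e k :: real
  assumes "k > 0" "1 < norm z"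
  shows "ennreal (norm z powr e * exp (- k * norm z))
    \<le> (\<Sum>m. ennreal ((real m + 2) powr max 0 e * exp (- k * (real m + 1))) * indicator (cball 0 (real m + 2)) z)"
proof -
  define r where "r = norm z"
  define m where "m = nat \<lfloor>r\<rfloor> - 1"
  have m: "real m + 1 \<le> r" "r \<le> real m + 2"
    using assms(2) unfolding m_def r_def by linarith+
  have "r powr e \<le> r powr max 0 e"
    using assms(2) by (intro powr_mono) (auto simp: r_def)
  also have "\<dots> \<le> (real m + 2) powr max 0 e"
    using assms(2) m by (intro powr_mono2) (auto simp: r_def)
  finally have "r powr e \<le> (real m + 2) powr max 0 e" .
  moreover have "exp (- k * r) \<le> exp (- k * (real m + 1))"
    using m assms(1) by simp
  ultimately have "ennreal (r powr e * exp (- k * r))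
      \<le> ennreal ((real m + 2) powr max 0 e * exp (- k * (real m + 1))) * indicator (cball 0 (real m + 2)) z"
    using m by (simp add: r_def mult_mono)
  also have "\<dots> \<le> (\<Sum>m. ennreal ((real m + 2) powr max 0 e * exp (- k * (real m + 1)))
      * indicator (cball 0 (real m + 2)) z)"
    by (rule ennreal_le_suminf)
  finally show ?thesis
    by (simp add: r_def)
qed

lemma nn_integral_norm_powr_exp_finite:
  fixes e k :: real
  assumes "k > 0" "- real DIM('a) < e"
  shows "(\<integral>\<^sup>+ z. ennreal (norm z powr e * exp (- k * norm z)) \<partial>(lborel::'a::euclidean_space measure))
    < \<infinity>"
proof -
  define F\<^sub>0 :: "'a \<Rightarrow> ennreal" where "F\<^sub>0 z =
    (\<Sum>n. ennreal (2 powr ((real n + 1) * max 0 (- e))) * indicator (cball 0 (2 powr - real n)) z)" for z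
  define F\<^sub>1 :: "'a \<Rightarrow> ennreal" where "F\<^sub>1 z =
    (\<Sum>m. ennreal ((real m + 2) powr max 0 e * exp (- k * (real m + 1))) * indicator (cball 0 (real m + 2)) z)"
    for z
  have [measurable]: "F\<^sub>0 \<in> borel_measurable lborel" "F\<^sub>1 \<in> borel_measurable lborel"
    unfolding F\<^sub>0_def F\<^sub>1_def by (intro borel_measurable_suminf_cmult_indicator; simp)+
  have "(\<integral>\<^sup>+ z. ennreal (norm z powr e * exp (- k * norm z)) \<partial>(lborel::'a measure))
      \<le> (\<integral>\<^sup>+ z. F\<^sub>0 z + F\<^sub>1 z \<partial>lborel)"
  proof (rule nn_integral_mono)
    fix z :: 'a
    show "ennreal (norm z powr e * exp (- k * norm z)) \<le> F\<^sub>0 z + F\<^sub>1 z"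
    proof (cases "norm z \<le> 1")
      case True
      then have "ennreal (norm z powr e * exp (- k * norm z)) \<le> F\<^sub>0 z"
        unfolding F\<^sub>0_def by (rule norm_powr_exp_le_dyadic_ball_series[OF assms(1)])
      then show ?thesis
        by (rule add_increasing2[rotated]) simp
    next
      case False
      then have "ennreal (norm z powr e * exp (- k * norm z)) \<le> F\<^sub>1 z"
        unfolding F\<^sub>1_def by (intro norm_powr_exp_le_integer_ball_series[OF assms(1)]) simp
      then show ?thesis
        by (rule add_increasing[rotated]) simp
    qed
  qed
  also have "\<dots> = integral\<^sup>N lborel F\<^sub>0 + integral\<^sup>N lborel F\<^sub>1"
    by (rule nn_integral_add) measurable
  also have "\<dots> < \<infinity>"
    using suminf_dyadic_balls_finite[of "max 0 (- e)", where 'a='a] suminf_integer_balls_finite[OF assms(1), of "max 0 e", where 'a='a]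
      assms(2)
    unfolding F\<^sub>0_def F\<^sub>1_def
    by (simp only: nn_integral_suminf_cmult_indicator sets_lborel borel_closed closed_cball
        ennreal_add_less_top infinity_ennreal_def) simp
  finally show ?thesis .
qed

section \<open>Jump energy of a saturated exponential\<close>

lemma nn_integral_lborel_translate:
  fixes H :: "'a::euclidean_space \<Rightarrow> ennreal"
  assumes [measurable]: "H \<in> borel_measurable borel"
  shows "(\<integral>\<^sup>+ y. H (y - x) \<partial>lborel) = (\<integral>\<^sup>+ z. H z \<partial>lborel)"
proof -
  have "(\<integral>\<^sup>+ y. H (y - x) \<partial>lborel) = (\<integral>\<^sup>+ y. H (y - x) \<partial>distr lborel borel ((+) x))"
    by (simp add: lborel_distr_plus)
  also have "\<dots> = (\<integral>\<^sup>+ z. H z \<partial>lborel)"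
    by (subst nn_integral_distr) auto
  finally show ?thesis .
qed

lemma lipschitz_of_gradient_bound:
  fixes V :: "'a::real_inner \<Rightarrow> real"
  assumes deriv: "\<And>x. (V has_derivative (\<lambda>h. g x \<bullet> h)) (at x)" and bound: "\<And>x. norm (g x) \<le> c"
  shows "\<bar>V x - V y\<bar> \<le> c * norm (x - y)"
proof -
  have "onorm (\<lambda>h. g z \<bullet> h) \<le> c" for z
  proof (rule onorm_bound)
    show "0 \<le> c"
      using norm_ge_zero bound order_trans by blast
    show "norm (g z \<bullet> h) \<le> c * norm h" for h
      using Cauchy_Schwarz_ineq2[of "g z" h] bound[of z] by (simp add: mult_right_mono order_trans)
  qed
  then show ?thesis
    using differentiable_bound[of UNIV V "\<lambda>x h. g x \<bullet> h" c x y] deriv by auto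
qed

lemma exp_minus_one_le: "0 \<le> (r::real) \<Longrightarrow> exp r - 1 \<le> r * exp r"
  using exp_ge_add_one_self[of "- r"] mult_right_mono[of "1 - r" "exp (- r)" "exp r"]
  by (simp add: exp_minus field_simps)

lemma sat_exp_kernel_integrand_le:
  fixes x y u :: "'a::real_inner" and V :: "'a \<Rightarrow> real"
  assumes "\<epsilon> \<ge> 0" "a \<ge> 0" "4 * a \<le> \<delta> - c" "norm u \<le> 1"
    and lip: "V x \<le> V y + c * norm (y - x)"
  defines "f \<equiv> \<lambda>x. sat_exp \<epsilon> (a * (u \<bullet> x))"
  shows "(f y - f x)\<^sup>2 / norm (y - x) powr p * exp (- \<delta> * norm (y - x)) * exp (- V y)
    \<le> a\<^sup>2 * (f x)\<^sup>2 * exp (- V x)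
      * (norm (y - x) powr (2 - p) * exp (- ((\<delta> - c) / 2) * norm (y - x)))"
proof -
  define r where "r = norm (y - x)"
  have "\<bar>u \<bullet> (y - x)\<bar> \<le> r"
    using Cauchy_Schwarz_ineq2[of u "y - x"] mult_right_mono[OF assms(4), of "norm (y - x)"]
    by (simp add: r_def)
  then have "\<bar>a * (u \<bullet> y) - a * (u \<bullet> x)\<bar> \<le> a * r"
    using assms(2) by (simp add: abs_mult inner_diff_right mult_left_mono flip: right_diff_distrib)
  then have "\<bar>f y - f x\<bar> \<le> f x * (a * r * exp (a * r))"
    using sat_exp_diff_le[OF assms(1), of "a * (u \<bullet> y)" "a * (u \<bullet> x)"] sat_exp_pos[OF assms(1)]
      exp_minus_one_le[of "a * r"] assms(2)
    by (smt (verit, best) f_def exp_le_cancel_iff mult_left_mono r_def norm_ge_zero zero_le_mult_iff)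
  then have "\<bar>f y - f x\<bar>\<^sup>2 \<le> (f x * (a * r * exp (a * r)))\<^sup>2"
    by (rule power_mono) simp
  then have diff2: "(f y - f x)\<^sup>2 \<le> a\<^sup>2 * (f x)\<^sup>2 * r\<^sup>2 * exp (2 * a * r)"
    by (simp add: mult_exp_exp power2_eq_square algebra_simps)
  have "exp (2 * a * r) * exp (- \<delta> * r) * exp (- V y) \<le> exp (- ((\<delta> - c) / 2) * r) * exp (- V x)"
  proof -
    have "4 * a * r \<le> (\<delta> - c) * r"
      using assms(3) by (intro mult_right_mono) (simp_all add: r_def)
    then have "2 * a * r + - \<delta> * r + - V y \<le> - ((\<delta> - c) / 2) * r + - V x"
      using lip unfolding r_def[symmetric] by (simp add: field_simps)
    then show ?thesis
      by (simp only: exp_add[symmetric] exp_le_cancel_iff)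
  qed
  with diff2 have "(f y - f x)\<^sup>2 * exp (- \<delta> * r) * exp (- V y)
      \<le> a\<^sup>2 * (f x)\<^sup>2 * exp (- V x) * (r\<^sup>2 * exp (- ((\<delta> - c) / 2) * r))"
    by (smt (verit, best) exp_gt_zero mult.assoc mult.commute mult_left_mono mult_right_mono
        zero_le_mult_iff zero_le_power2)
  then have "(f y - f x)\<^sup>2 / r powr p * exp (- \<delta> * r) * exp (- V y)
      \<le> a\<^sup>2 * (f x)\<^sup>2 * exp (- V x) * (r\<^sup>2 / r powr p * exp (- ((\<delta> - c) / 2) * r))"
    using divide_right_mono[of _ _ "r powr p"] by (simp add: mult_ac)
  moreover have "r\<^sup>2 / r powr p = r powr (2 - p)"
    \<comment> \<open>also at \<open>r = 0\<close>, where \<open>0 powr _ = 0\<close> and division by zero gives \<open>0\<close>\<close>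
    by (cases "r = 0") (simp_all add: r_def powr_diff powr_realpow)
  ultimately show ?thesis
    unfolding r_def by (simp only:)
qed

lemma nn_integral_kernel_sat_exp_le:
  fixes V :: "'a::euclidean_space \<Rightarrow> real" and u x :: 'a
  assumes [measurable]: "V \<in> borel_measurable borel"
    and lip: "\<And>y. V x \<le> V y + c * norm (y - x)"
    and "\<epsilon> \<ge> 0" "a \<ge> 0" "4 * a \<le> \<delta> - c" "norm u \<le> 1"
  defines "f \<equiv> \<lambda>x. sat_exp \<epsilon> (a * (u \<bullet> x))"
  shows "(\<integral>\<^sup>+y. ennreal ((f y - f x)\<^sup>2 / norm (y - x) powr p
        * exp (- \<delta> * norm (y - x)) * exp (- V y)) \<partial>lborel)
    \<le> ennreal (a\<^sup>2 * (f x)\<^sup>2 * exp (- V x))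
      * (\<integral>\<^sup>+z. ennreal (norm z powr (2 - p) * exp (- ((\<delta> - c) / 2) * norm z)) \<partial>(lborel::'a measure))"
proof -
  define K where "K z = ennreal (norm z powr (2 - p) * exp (- ((\<delta> - c) / 2) * norm z))" for z :: 'a
  have [measurable]: "K \<in> borel_measurable borel"
    unfolding K_def by measurable
  have "(\<integral>\<^sup>+y. ennreal ((f y - f x)\<^sup>2 / norm (y - x) powr p
      * exp (- \<delta> * norm (y - x)) * exp (- V y)) \<partial>lborel)
    \<le> (\<integral>\<^sup>+y. ennreal (a\<^sup>2 * (f x)\<^sup>2 * exp (- V x)) * K (y - x) \<partial>lborel)"
  proof (rule nn_integral_mono)
    fix y
    show "ennreal ((f y - f x)\<^sup>2 / norm (y - x) powr p * exp (- \<delta> * norm (y - x)) * exp (- V y))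
        \<le> ennreal (a\<^sup>2 * (f x)\<^sup>2 * exp (- V x)) * K (y - x)"
      using sat_exp_kernel_integrand_le[OF assms(3-6) lip[of y]]
      by (simp add: K_def f_def ennreal_leI flip: ennreal_mult)
  qed
  also have "\<dots> = ennreal (a\<^sup>2 * (f x)\<^sup>2 * exp (- V x)) * integral\<^sup>N lborel K"
    by (simp add: nn_integral_cmult nn_integral_lborel_translate)
  finally show ?thesis
    unfolding K_def .
qed

lemma kernel_energy_sat_exp_le:
  fixes V :: "'a::euclidean_space \<Rightarrow> real" and u :: 'a and p :: real
  assumes [measurable]: "V \<in> borel_measurable borel"
    and lip: "\<And>x y. V x \<le> V y + c * norm (y - x)"
    and "\<epsilon> \<ge> 0" "a \<ge> 0" "4 * a \<le> \<delta> - c" "norm u \<le> 1"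
  defines "f \<equiv> \<lambda>x. sat_exp \<epsilon> (a * (u \<bullet> x))"
    and "J \<equiv> \<integral>\<^sup>+z. ennreal (norm z powr (2 - p) * exp (- ((\<delta> - c) / 2) * norm z)) \<partial>(lborel::'a measure)"
  shows "(\<integral>\<^sup>+x. (\<integral>\<^sup>+y. ennreal ((f y - f x)\<^sup>2 / norm (y - x) powr p
              * exp (- \<delta> * norm (y - x)) * exp (- V y)) \<partial>lborel) * ennreal (exp (- V x)) \<partial>lborel)
    \<le> ennreal (a\<^sup>2) * J * (\<integral>\<^sup>+x. ennreal ((f x)\<^sup>2) * ennreal (exp (- 2 * V x)) \<partial>lborel)"
proof -
  have [measurable]: "f \<in> borel_measurable borel"
    unfolding f_def sat_exp_def by measurable
  have "(\<integral>\<^sup>+x. (\<integral>\<^sup>+y. ennreal ((f y - f x)\<^sup>2 / norm (y - x) powr p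
              * exp (- \<delta> * norm (y - x)) * exp (- V y)) \<partial>lborel) * ennreal (exp (- V x)) \<partial>lborel)
    \<le> (\<integral>\<^sup>+x. ennreal (a\<^sup>2) * J * (ennreal ((f x)\<^sup>2) * ennreal (exp (- 2 * V x))) \<partial>lborel)"
  proof (rule nn_integral_mono)
    fix x
    have "(\<integral>\<^sup>+y. ennreal ((f y - f x)\<^sup>2 / norm (y - x) powr p
              * exp (- \<delta> * norm (y - x)) * exp (- V y)) \<partial>lborel) * ennreal (exp (- V x))
        \<le> ennreal (a\<^sup>2 * (f x)\<^sup>2 * exp (- V x)) * J * ennreal (exp (- V x))"
      using nn_integral_kernel_sat_exp_le[OF assms(1) lip assms(3-6), of x p]
      unfolding f_def J_def by (rule mult_right_mono) simp
    also have "\<dots> = J * (ennreal ((a\<^sup>2 * (f x)\<^sup>2) * exp (- V x)) * ennreal (exp (- V x)))"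
      by (simp only: mult_ac)
    also have "ennreal ((a\<^sup>2 * (f x)\<^sup>2) * exp (- V x)) * ennreal (exp (- V x))
        = ennreal (a\<^sup>2 * (f x)\<^sup>2) * ennreal (exp (- 2 * V x))"
      by (simp add: mult_exp_exp flip: ennreal_mult)
    also have "J * (ennreal (a\<^sup>2 * (f x)\<^sup>2) * ennreal (exp (- 2 * V x)))
        = ennreal (a\<^sup>2) * J * (ennreal ((f x)\<^sup>2) * ennreal (exp (- 2 * V x)))"
      by (simp add: ennreal_mult mult_ac)
    finally show "(\<integral>\<^sup>+y. ennreal ((f y - f x)\<^sup>2 / norm (y - x) powr p
              * exp (- \<delta> * norm (y - x)) * exp (- V y)) \<partial>lborel) * ennreal (exp (- V x))
        \<le> ennreal (a\<^sup>2) * J * (ennreal ((f x)\<^sup>2) * ennreal (exp (- 2 * V x)))" .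
  qed
  also have "\<dots> = ennreal (a\<^sup>2) * J * (\<integral>\<^sup>+x. ennreal ((f x)\<^sup>2) * ennreal (exp (- 2 * V x)) \<partial>lborel)"
    by (rule nn_integral_cmult) measurable
  finally show ?thesis .
qed

lemma integrable_exp_minus_twice:
  fixes V :: "'a::euclidean_space \<Rightarrow> real"
  assumes "V \<in> borel_measurable borel" "bounded (range (\<lambda>x. exp (- V x)))"
    and "integrable lborel (\<lambda>x. exp (- V x))"
  shows "integrable lborel (\<lambda>x. exp (- 2 * V x))"
proof -
  obtain B where B: "\<And>x. exp (- V x) \<le> B"
    using assms(2) unfolding bounded_iff by auto
  show ?thesis
  proof (rule Bochner_Integration.integrable_bound[OF integrable_mult_left[OF assms(3), of B]])
    show "(\<lambda>x. exp (- 2 * V x)) \<in> borel_measurable lborel"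
      using assms(1) by measurable
    have "exp (- 2 * V x) \<le> exp (- V x) * B" for x
      using mult_left_mono[OF B[of x], of "exp (- V x)"] by (simp flip: exp_add)
    then show "AE x in lborel. norm (exp (- 2 * V x)) \<le> norm (exp (- V x) * B)"
      by (intro AE_I2) (simp add: order_trans[OF _ abs_ge_self])
  qed
qed

lemma integral_lborel_pos:
  fixes g :: "'a::euclidean_space \<Rightarrow> real"
  assumes "integrable lborel g" "\<And>x. g x > 0"
  shows "integral\<^sup>L lborel g > 0"
proof -
  have "integral\<^sup>L lborel g \<noteq> 0"
  proof
    assume "integral\<^sup>L lborel g = 0"
    then have "AE x in lborel. g x = 0"
      using integral_nonneg_eq_0_iff_AE[OF assms(1)] assms(2) by (simp add: less_imp_le)
    moreover have "{x \<in> space lborel. g x \<noteq> 0} = UNIV"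
      using assms(2) by (auto simp: less_imp_neq[symmetric])
    ultimately show False
      using AE_iff_measurable[of UNIV lborel "\<lambda>x. g x = 0"] by simp
  qed
  moreover have "integral\<^sup>L lborel g \<ge> 0"
    using assms(2) by (intro integral_nonneg_AE) (auto intro: less_imp_le)
  ultimately show ?thesis by simp
qed

lemma
  fixes V :: "'a::euclidean_space \<Rightarrow> real"
  assumes [measurable]: "V \<in> borel_measurable borel" and int: "integrable lborel (\<lambda>x. exp (- 2 * V x))"
  defines "Z \<equiv> \<integral>x. exp (- 2 * V x) \<partial>lborel"
  shows prob_space_mu2V: "prob_space (mu2V V)"
    and nn_integral_mu2V: "g \<in> borel_measurable borel \<Longrightarrow>
      (\<integral>\<^sup>+x. g x * ennreal (exp (- 2 * V x)) \<partial>lborel) = ennreal Z * (\<integral>\<^sup>+x. g x \<partial>mu2V V)"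
proof -
  have Z: "Z > 0"
    unfolding Z_def by (rule integral_lborel_pos[OF int]) simp
  have mu2V_eq: "mu2V V = density lborel (\<lambda>x. ennreal (exp (- 2 * V x) / Z))"
    by (simp add: mu2V_def Z_def)
  have "emeasure (mu2V V) UNIV = (\<integral>\<^sup>+x. ennreal (exp (- 2 * V x) / Z) \<partial>lborel)"
    unfolding mu2V_eq by (simp add: emeasure_density)
  also have "\<dots> = ennreal (\<integral>x. exp (- 2 * V x) / Z \<partial>lborel)"
    by (rule nn_integral_eq_integral) (use int Z in auto)
  also have "\<dots> = 1"
    using Z by (simp add: Z_def)
  finally show "prob_space (mu2V V)"
    by (intro prob_spaceI) (simp add: mu2V_eq)
  assume [measurable]: "g \<in> borel_measurable borel"
  have "ennreal Z * (\<integral>\<^sup>+x. g x \<partial>mu2V V) = (\<integral>\<^sup>+x. ennreal Z * (ennreal (exp (- 2 * V x) / Z) * g x) \<partial>lborel)"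
    by (simp add: mu2V_eq nn_integral_density nn_integral_cmult)
  also have "\<dots> = (\<integral>\<^sup>+x. g x * ennreal (exp (- 2 * V x)) \<partial>lborel)"
  proof (intro nn_integral_cong)
    fix x
    have "ennreal Z * ennreal (exp (- 2 * V x) / Z) = ennreal (exp (- 2 * V x))"
      using Z by (simp flip: ennreal_mult)
    then show "ennreal Z * (ennreal (exp (- 2 * V x) / Z) * g x) = g x * ennreal (exp (- 2 * V x))"
      by (metis mult.assoc mult.commute)
  qed
  finally show "(\<integral>\<^sup>+x. g x * ennreal (exp (- 2 * V x)) \<partial>lborel) = ennreal Z * (\<integral>\<^sup>+x. g x \<partial>mu2V V)"
    by simp
qed

section \<open>Exponential moments from a reverse Cauchy-Schwarz inequality\<close>

lemma le_add_square_div_add_indicator: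
  fixes y m K :: real
  assumes "0 < m" "0 \<le> K" "x \<notin> S \<Longrightarrow> y \<le> K"
  shows "y \<le> K + y\<^sup>2 / (4 * m) + m * indicator S x"
proof (cases "x \<in> S")
  case True
  have "0 \<le> (y - 2 * m)\<^sup>2 / (4 * m)"
    using assms(1) by simp
  also have "\<dots> = y\<^sup>2 / (4 * m) + m - y"
    using assms(1) by (simp add: field_simps power2_eq_square)
  finally show ?thesis
    using True assms(2) by simp
next
  case False
  then show ?thesis
    using assms by (simp add: add_increasing2)
qed

lemma (in prob_space) second_moment_le_of_bounded_off_small_set:
  fixes f :: "'a \<Rightarrow> real"
  assumes int: "integrable M f" "integrable M (\<lambda>x. (f x)\<^sup>2)"
    and nonneg: "\<And>x. x \<in> space M \<Longrightarrow> 0 \<le> f x"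
    and reverse: "expectation (\<lambda>x. (f x)\<^sup>2) \<le> 2 * (expectation f)\<^sup>2"
    and S: "S \<in> events" "prob S \<le> 1 / 16"
    and bounded: "\<And>x. x \<in> space M \<Longrightarrow> x \<notin> S \<Longrightarrow> f x \<le> K" "0 \<le> K"
  shows "expectation (\<lambda>x. (f x)\<^sup>2) \<le> 11 * K\<^sup>2"
proof -
  define m where "m = expectation f"
  define Q where "Q = expectation (\<lambda>x. (f x)\<^sup>2)"
  have "m \<ge> 0"
    unfolding m_def using nonneg by (intro integral_nonneg_AE) auto
  show ?thesis
  proof (cases "m = 0")
    case True
    have "Q \<le> 0"
      using reverse True by (simp add: m_def Q_def)
    moreover have "0 \<le> 11 * K\<^sup>2"
      by simp
    ultimately show ?thesis
      unfolding Q_def by linarith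
  next
    case False
    with \<open>m \<ge> 0\<close> have "m > 0" by simp
    then have "f x \<le> K + (f x)\<^sup>2 / (4 * m) + m * indicator S x" if "x \<in> space M" for x
      using bounded that by (intro le_add_square_div_add_indicator) auto
    moreover have int_S: "integrable M (indicator S :: 'a \<Rightarrow> real)"
      using S by (intro integrable_real_indicator) (auto simp: less_top[symmetric] emeasure_finite)
    ultimately have "m \<le> expectation (\<lambda>x. K + (f x)\<^sup>2 / (4 * m) + m * indicator S x)"
      unfolding m_def using int by (intro integral_mono) auto
    also have "\<dots> = K + Q / (4 * m) + m * prob S"
      using int int_S S(1) by (simp add: Q_def prob_space Int_absorb2)
    also have "\<dots> \<le> K + m / 2 + m / 16"
      using reverse S \<open>m > 0\<close> by (intro add_mono) (simp_all add: Q_def m_def field_simps power2_eq_square)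
    finally have "m \<le> 16 / 7 * K"
      by simp
    then have "m\<^sup>2 \<le> (16 / 7 * K)\<^sup>2"
      using \<open>m > 0\<close> by (intro power_mono) auto
    also have "\<dots> = 256 / 49 * K\<^sup>2"
      by (simp add: power2_eq_square)
    finally have "2 * m\<^sup>2 \<le> 11 * K\<^sup>2"
      using zero_le_power2[of K] by linarith
    with reverse show ?thesis
      by (simp add: m_def)
  qed
qed

lemma nn_integral_exp_le_of_sat_exp_bound:
  assumes [measurable]: "s \<in> borel_measurable M"
    and bound: "\<And>\<epsilon>. \<epsilon> > 0 \<Longrightarrow> (\<integral>\<^sup>+x. ennreal ((sat_exp \<epsilon> (s x))\<^sup>2) \<partial>M) \<le> B"
  shows "(\<integral>\<^sup>+x. ennreal (exp (2 * s x)) \<partial>M) \<le> B"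
proof -
  define g where "g n x = ennreal ((sat_exp (1 / Suc n) (s x))\<^sup>2)" for n x
  have "(\<lambda>n. sat_exp (1 / Suc n) (s x)) \<longlonglongrightarrow> exp (s x) / (1 + 0 * exp (s x))" for x
    unfolding sat_exp_def by (intro tendsto_intros LIMSEQ_Suc[OF lim_const_over_n]) auto
  then have "(\<lambda>n. g n x) \<longlonglongrightarrow> ennreal (exp (2 * s x))" for x
    unfolding g_def by (intro tendsto_ennrealI) (auto intro!: tendsto_eq_intros simp: exp_double)
  then have "(\<integral>\<^sup>+x. ennreal (exp (2 * s x)) \<partial>M) = (\<integral>\<^sup>+x. liminf (\<lambda>n. g n x) \<partial>M)"
    by (intro nn_integral_cong) (simp add: lim_imp_Liminf[symmetric])
  also have "\<dots> \<le> liminf (\<lambda>n. \<integral>\<^sup>+x. g n x \<partial>M)"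
    by (rule nn_integral_liminf) (simp add: g_def sat_exp_def)
  also have "\<dots> \<le> B"
    using bound unfolding g_def by (intro Liminf_le always_eventually) auto
  finally show ?thesis .
qed

lemma (in prob_space) ex_prob_greater_less:
  fixes X :: "'a \<Rightarrow> real"
  assumes [measurable]: "X \<in> borel_measurable M" and "e > 0"
  shows "\<exists>R. prob {x \<in> space M. R < X x} < e"
proof -
  define A where "A n = {x \<in> space M. real n < X x}" for n :: nat
  have "(\<lambda>n. prob (A n)) \<longlonglongrightarrow> prob (\<Inter>n. A n)"
    by (rule finite_Lim_measure_decseq) (auto simp: A_def decseq_def)
  moreover have "(\<Inter>n. A n) = {}"
    by (auto simp: A_def) (meson less_asym reals_Archimedean2)
  ultimately have "eventually (\<lambda>n. prob (A n) < e) sequentially"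
    using assms(2) by (simp add: order_tendstoD)
  then show ?thesis
    by (auto simp: A_def eventually_sequentially)
qed

lemma (in prob_space) nn_integral_exp_finite_of_reverse_moment:
  fixes X :: "'a \<Rightarrow> real"
  assumes [measurable]: "X \<in> borel_measurable M" and "a \<ge> 0"
    and reverse: "\<And>\<epsilon>. \<epsilon> > 0 \<Longrightarrow> expectation (\<lambda>x. (sat_exp \<epsilon> (a * X x))\<^sup>2)
      \<le> 2 * (expectation (\<lambda>x. sat_exp \<epsilon> (a * X x)))\<^sup>2"
  shows "(\<integral>\<^sup>+x. ennreal (exp (2 * (a * X x))) \<partial>M) < \<infinity>"
proof -
  obtain R where R: "prob {x \<in> space M. R < X x} < 1 / 16"
    using ex_prob_greater_less[of X "1 / 16"] by auto
  define K where "K = exp (a * R)"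
  have "(\<integral>\<^sup>+x. ennreal ((sat_exp \<epsilon> (a * X x))\<^sup>2) \<partial>M) \<le> ennreal (11 * K\<^sup>2)" if "\<epsilon> > 0" for \<epsilon>
  proof -
    define f where "f = (\<lambda>x. sat_exp \<epsilon> (a * X x))"
    have [measurable]: "f \<in> borel_measurable M"
      unfolding f_def sat_exp_def by measurable
    have f_nonneg: "0 \<le> f x" and f_le: "f x \<le> 1 / \<epsilon>" for x
      using sat_exp_pos[of \<epsilon>] sat_exp_le_inverse[of \<epsilon>] that by (auto simp: f_def less_imp_le)
    have "(f x)\<^sup>2 \<le> (1 / \<epsilon>)\<^sup>2" for x
      using f_nonneg f_le by (intro power_mono)
    then have int: "integrable M f" "integrable M (\<lambda>x. (f x)\<^sup>2)"
      using f_nonneg f_le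
      by (auto intro!: integrable_const_bound[where B="1 / \<epsilon>" and f=f]
          integrable_const_bound[where B="(1 / \<epsilon>)\<^sup>2" and f="\<lambda>x. (f x)\<^sup>2"])
    have "expectation (\<lambda>x. (f x)\<^sup>2) \<le> 11 * K\<^sup>2"
    proof (rule second_moment_le_of_bounded_off_small_set[OF int f_nonneg])
      show "expectation (\<lambda>x. (f x)\<^sup>2) \<le> 2 * (expectation f)\<^sup>2"
        using reverse[OF that] by (simp add: f_def)
      show "{x \<in> space M. R < X x} \<in> events" "prob {x \<in> space M. R < X x} \<le> 1 / 16"
        using R by auto
      show "f x \<le> K" if "x \<notin> {x \<in> space M. R < X x}" "x \<in> space M" for x
        using that sat_exp_le_exp[of \<epsilon> "a * X x"] \<open>\<epsilon> > 0\<close> mult_left_mono[of "X x" R a] \<open>a \<ge> 0\<close>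
        by (auto simp: f_def K_def intro: order_trans)
      show "0 \<le> K"
        by (simp add: K_def)
    qed
    then show ?thesis
      using int by (simp add: nn_integral_eq_integral f_nonneg f_def)
  qed
  then have "(\<integral>\<^sup>+x. ennreal (exp (2 * (a * X x))) \<partial>M) \<le> ennreal (11 * K\<^sup>2)"
    by (intro nn_integral_exp_le_of_sat_exp_bound) auto
  then show ?thesis
    by (rule le_less_trans) simp
qed

lemma exp_norm_le_sum_Basis:
  fixes x :: "'a::euclidean_space"
  assumes "c \<ge> 0"
  shows "exp (c / real DIM('a) * norm x) \<le> (\<Sum>b\<in>Basis. exp (c * (b \<bullet> x)) + exp (c * (- b \<bullet> x)))"
proof -
  have "Max ((\<lambda>b. \<bar>b \<bullet> x\<bar>) ` Basis) \<in> (\<lambda>b. \<bar>b \<bullet> x\<bar>) ` Basis"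
    by (intro Max_in) auto
  then obtain b where b: "b \<in> Basis" "Max ((\<lambda>b. \<bar>b \<bullet> x\<bar>) ` Basis) = \<bar>b \<bullet> x\<bar>"
    by blast
  have "norm x \<le> (\<Sum>b'\<in>Basis. \<bar>x \<bullet> b'\<bar>)"
    by (rule norm_le_l1)
  also have "\<dots> \<le> (\<Sum>b'::'a\<in>Basis. \<bar>b \<bullet> x\<bar>)"
    by (intro sum_mono) (auto simp: inner_commute simp flip: b(2) intro!: Max_ge)
  finally have "c / real DIM('a) * norm x \<le> c * \<bar>b \<bullet> x\<bar>"
    using assms by (simp add: field_simps mult_left_mono)
  then have "exp (c / real DIM('a) * norm x) \<le> exp (c * \<bar>b \<bullet> x\<bar>)"
    by simp
  also have "\<dots> \<le> exp (c * (b \<bullet> x)) + exp (c * (- b \<bullet> x))"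
  proof (cases "b \<bullet> x \<ge> 0")
    case True
    then show ?thesis
      by (intro add_increasing2) simp_all
  next
    case False
    then show ?thesis
      by (intro add_increasing) simp_all
  qed
  also have "\<dots> \<le> (\<Sum>b\<in>Basis. exp (c * (b \<bullet> x)) + exp (c * (- b \<bullet> x)))"
    using b(1) by (intro member_le_sum) (auto intro: add_nonneg_nonneg)
  finally show ?thesis .
qed

lemma nn_integral_exp_norm_finite_of_directional:
  fixes M :: "'a::euclidean_space measure"
  assumes [measurable_cong]: "sets M = sets borel" and "c \<ge> 0"
    and directional: "\<And>u. norm u = 1 \<Longrightarrow> (\<integral>\<^sup>+x. ennreal (exp (c * (u \<bullet> x))) \<partial>M) < \<infinity>"
  shows "(\<integral>\<^sup>+x. ennreal (exp (c / real DIM('a) * norm x)) \<partial>M) < \<infinity>"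
proof -
  have "(\<integral>\<^sup>+x. ennreal (exp (c / real DIM('a) * norm x)) \<partial>M)
      \<le> (\<integral>\<^sup>+x. (\<Sum>b\<in>Basis. ennreal (exp (c * (b \<bullet> x))) + ennreal (exp (c * (- b \<bullet> x)))) \<partial>M)"
    using exp_norm_le_sum_Basis[OF assms(2)]
    by (intro nn_integral_mono) (simp add: ennreal_leI ennreal_plus[symmetric] sum_nonneg del: ennreal_plus)
  also have "\<dots> = (\<Sum>b\<in>Basis. (\<integral>\<^sup>+x. ennreal (exp (c * (b \<bullet> x))) \<partial>M)
      + (\<integral>\<^sup>+x. ennreal (exp (c * (- b \<bullet> x))) \<partial>M))"
    by (simp add: nn_integral_sum nn_integral_add)
  also have "\<dots> < \<infinity>"
    using directional[of "- _"] directional by simp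
  finally show ?thesis .
qed

section \<open>The Poincare inequality on saturated exponentials\<close>

lemma second_moment_le_twice_square_mean_of_poincare:
  fixes V f :: "'a::euclidean_space \<Rightarrow> real"
  assumes [measurable]: "V \<in> borel_measurable borel" "f \<in> borel_measurable borel"
    and int: "integrable lborel (\<lambda>x. exp (- 2 * V x))"
    and bounded: "\<And>x. \<bar>f x\<bar> \<le> B"
    and poincare: "ennreal (\<integral>x. (f x - (\<integral>y. f y \<partial>mu2V V))\<^sup>2 \<partial>mu2V V) \<le> ennreal C * E"
    and energy: "E \<le> ennreal \<theta> * (\<integral>\<^sup>+x. ennreal ((f x)\<^sup>2) * ennreal (exp (- 2 * V x)) \<partial>lborel)"
    and small: "0 \<le> C" "0 \<le> \<theta>" "C * \<theta> * (\<integral>x. exp (- 2 * V x) \<partial>lborel) \<le> 1 / 2"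
  shows "(\<integral>x. (f x)\<^sup>2 \<partial>mu2V V) \<le> 2 * (\<integral>x. f x \<partial>mu2V V)\<^sup>2"
proof -
  interpret prob_space "mu2V V"
    by (rule prob_space_mu2V) (use int in simp_all)
  have [simp, measurable_cong]: "sets (mu2V V) = sets borel"
    by (simp add: mu2V_def)
  define Z where "Z = (\<integral>x. exp (- 2 * V x) \<partial>lborel)"
  define Q where "Q = expectation (\<lambda>x. (f x)\<^sup>2)"
  have "(f x)\<^sup>2 \<le> B\<^sup>2" for x
    using power_mono[OF bounded[of x] abs_ge_zero, of 2] by simp
  then have int_f: "integrable (mu2V V) f" "integrable (mu2V V) (\<lambda>x. (f x)\<^sup>2)"
    using bounded
    by (auto intro!: integrable_const_bound[where B=B and f=f]
        integrable_const_bound[where B="B\<^sup>2" and f="\<lambda>x. (f x)\<^sup>2"])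
  have "Z \<ge> 0" "Q \<ge> 0"
    unfolding Z_def Q_def by (auto intro!: integral_nonneg_AE)
  have "(\<integral>\<^sup>+x. ennreal ((f x)\<^sup>2) * ennreal (exp (- 2 * V x)) \<partial>lborel) = ennreal Z * ennreal Q"
    by (subst nn_integral_mu2V[OF _ int]) (simp_all add: Z_def Q_def nn_integral_eq_integral int_f)
  then have "ennreal (Q - (expectation f)\<^sup>2) \<le> ennreal C * (ennreal \<theta> * (ennreal Z * ennreal Q))"
    using poincare mult_left_mono[OF energy, of "ennreal C"] int_f by (simp add: Q_def variance_eq)
  also have "ennreal C * (ennreal \<theta> * (ennreal Z * ennreal Q)) = ennreal ((C * \<theta> * Z) * Q)"
    using small \<open>Z \<ge> 0\<close> \<open>Q \<ge> 0\<close> by (simp add: ennreal_mult mult_ac)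
  finally have "Q - (expectation f)\<^sup>2 \<le> (C * \<theta> * Z) * Q"
    using small \<open>Z \<ge> 0\<close> \<open>Q \<ge> 0\<close> by (subst (asm) ennreal_le_iff) auto
  also have "\<dots> \<le> Q / 2"
    using mult_right_mono[OF small(3) \<open>Q \<ge> 0\<close>] by (simp add: Z_def)
  finally show ?thesis
    by (simp add: Q_def)
qed

lemma second_moment_sat_exp_le_of_poincare:
  fixes V :: "'a::euclidean_space \<Rightarrow> real" and u :: 'a
  assumes [measurable]: "V \<in> borel_measurable borel"
    and int: "integrable lborel (\<lambda>x. exp (- 2 * V x))"
    and lip: "\<And>x y. V x \<le> V y + c * norm (y - x)"
    and poincare: "\<And>f. Cb_inf f \<Longrightarrow>
        ennreal (\<integral>x. (f x - (\<integral>y. f y \<partial>mu2V V))\<^sup>2 \<partial>mu2V V)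
        \<le> ennreal C * (\<integral>\<^sup>+x. (\<integral>\<^sup>+y. ennreal ((f y - f x)\<^sup>2 / norm (y - x) powr p
              * exp (- \<delta> * norm (y - x)) * exp (- V y)) \<partial>lborel) * ennreal (exp (- V x)) \<partial>lborel)"
    and J: "(\<integral>\<^sup>+z. ennreal (norm z powr (2 - p) * exp (- ((\<delta> - c) / 2) * norm z)) \<partial>(lborel::'a measure))
      = ennreal J" "0 \<le> J"
    and a: "0 \<le> a" "4 * a \<le> \<delta> - c" "C * (a\<^sup>2 * J) * (\<integral>x. exp (- 2 * V x) \<partial>lborel) \<le> 1 / 2"
    and "0 \<le> C" "0 < \<epsilon>" "norm u \<le> 1"
  shows "(\<integral>x. (sat_exp \<epsilon> (a * (u \<bullet> x)))\<^sup>2 \<partial>mu2V V)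
    \<le> 2 * (\<integral>x. sat_exp \<epsilon> (a * (u \<bullet> x)) \<partial>mu2V V)\<^sup>2"
proof (rule second_moment_le_twice_square_mean_of_poincare[OF _ _ int _ poincare[OF Cb_inf_sat_exp]])
  show "(\<lambda>x. sat_exp \<epsilon> (a * (u \<bullet> x))) \<in> borel_measurable borel"
    unfolding sat_exp_def by measurable
  show "\<bar>sat_exp \<epsilon> (a * (u \<bullet> x))\<bar> \<le> 1 / \<epsilon>" for x
    using sat_exp_pos[of \<epsilon>] sat_exp_le_inverse[of \<epsilon>] \<open>0 < \<epsilon>\<close> by (simp add: abs_of_pos)
  show "(\<integral>\<^sup>+x. (\<integral>\<^sup>+y. ennreal ((sat_exp \<epsilon> (a * (u \<bullet> y)) - sat_exp \<epsilon> (a * (u \<bullet> x)))\<^sup>2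
          / norm (y - x) powr p * exp (- \<delta> * norm (y - x)) * exp (- V y)) \<partial>lborel)
          * ennreal (exp (- V x)) \<partial>lborel)
      \<le> ennreal (a\<^sup>2 * J) * (\<integral>\<^sup>+x. ennreal ((sat_exp \<epsilon> (a * (u \<bullet> x)))\<^sup>2) * ennreal (exp (- 2 * V x)) \<partial>lborel)"
    using kernel_energy_sat_exp_le[of V c \<epsilon> a \<delta> u p] lip a J \<open>0 < \<epsilon>\<close> \<open>norm u \<le> 1\<close>
    by (simp add: ennreal_mult)
qed (use assms in simp_all)

lemma ex_small_scale:
  fixes \<kappa> W :: real
  assumes "\<kappa> > 0" "W \<ge> 0"
  shows "\<exists>a > 0. 4 * a \<le> \<kappa> \<and> a\<^sup>2 * W \<le> 1 / 2"
proof -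
  define a where "a = min (\<kappa> / 4) (1 / (2 * W + 1))"
  have "0 < a" "4 * a \<le> \<kappa>" "a \<le> 1 / (2 * W + 1)" "1 / (2 * W + 1) \<le> 1"
    using assms by (auto simp: a_def min_def add_pos_nonneg)
  then have "a\<^sup>2 \<le> a"
    by (simp add: power2_eq_square mult_left_le_one_le)
  then have "a\<^sup>2 * W \<le> a * W"
    using \<open>W \<ge> 0\<close> by (rule mult_right_mono)
  also have "\<dots> \<le> 1 / (2 * W + 1) * W"
    using \<open>a \<le> 1 / (2 * W + 1)\<close> \<open>W \<ge> 0\<close> by (rule mult_right_mono)
  also have "\<dots> \<le> 1 / 2"
    using \<open>W \<ge> 0\<close> by (simp add: field_simps)
  finally show ?thesis
    using \<open>0 < a\<close> \<open>4 * a \<le> \<kappa>\<close> by blast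
qed

theorem proposition5p3:
  fixes V :: "'a::euclidean_space \<Rightarrow> real"
    and gradV :: "'a \<Rightarrow> 'a"
    and \<delta> \<alpha> C\<^sub>1 :: real
  assumes V_meas: "V \<in> borel_measurable borel"
    and V_locbdd: "locally_bounded V"
    and expV_bdd: "bounded (range (\<lambda>x. exp (- V x)))"
    and expV_int: "integrable lborel (\<lambda>x. exp (- V x))"
    and delta_pos: "\<delta> > 0"
    and alpha: "0 < \<alpha>" "\<alpha> < 2"
    and V_grad: "\<And>x. (V has_derivative (\<lambda>h. gradV x \<bullet> h)) (at x)"
    and V_C1: "continuous_on UNIV gradV"
    and grad_sup: "\<exists>c < \<delta>. \<forall>x. norm (gradV x) \<le> c"
    and C1_pos: "C\<^sub>1 > 0"
    and poincare: "\<And>f. Cb_inf f \<Longrightarrow>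
        ennreal (\<integral>x. (f x - (\<integral>y. f y \<partial>mu2V V))\<^sup>2 \<partial>mu2V V)
        \<le> ennreal C\<^sub>1 * (\<integral>\<^sup>+x. (\<integral>\<^sup>+y. ennreal ((f y - f x)\<^sup>2
              / norm (y - x) powr (real DIM('a) + \<alpha>)
              * exp (- \<delta> * norm (y - x)) * exp (- V y)) \<partial>lborel)
              * ennreal (exp (- V x)) \<partial>lborel)"
  shows "\<exists>l\<^sub>0 > 0. (\<integral>\<^sup>+x. ennreal (exp (l\<^sub>0 * norm x)) \<partial>mu2V V) < \<infinity>"
proof -
  obtain c where "c < \<delta>" and grad_le: "\<And>x. norm (gradV x) \<le> c"
    using grad_sup by blast
  have lip: "V x \<le> V y + c * norm (y - x)" for x y
    using lipschitz_of_gradient_bound[OF V_grad grad_le, of x y] by (simp add: norm_minus_commute)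
  obtain J where J: "(\<integral>\<^sup>+z. ennreal (norm z powr (2 - (real DIM('a) + \<alpha>)) * exp (- ((\<delta> - c) / 2) * norm z))
      \<partial>(lborel::'a measure)) = ennreal J" "J \<ge> 0"
    using nn_integral_norm_powr_exp_finite[of "(\<delta> - c) / 2" "2 - (real DIM('a) + \<alpha>)", where 'a='a]
      \<open>c < \<delta>\<close> alpha by (auto simp: less_top_ennreal)
  have int: "integrable lborel (\<lambda>x. exp (- 2 * V x))"
    by (rule integrable_exp_minus_twice[OF V_meas expV_bdd expV_int])
  obtain a where "a > 0" "4 * a \<le> \<delta> - c" "a\<^sup>2 * (C\<^sub>1 * J * (\<integral>x. exp (- 2 * V x) \<partial>lborel)) \<le> 1 / 2"
    using ex_small_scale[of "\<delta> - c" "C\<^sub>1 * J * (\<integral>x. exp (- 2 * V x) \<partial>lborel)"] \<open>c < \<delta>\<close> C1_pos J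
    by (auto intro: integral_nonneg_AE)
  interpret prob_space "mu2V V"
    by (rule prob_space_mu2V[OF V_meas int])
  have "(\<integral>\<^sup>+x. ennreal (exp (2 * (a * (u \<bullet> x)))) \<partial>mu2V V) < \<infinity>" if "norm u = 1" for u
    using second_moment_sat_exp_le_of_poincare[OF V_meas int lip poincare J] \<open>a > 0\<close> \<open>4 * a \<le> \<delta> - c\<close>
      \<open>a\<^sup>2 * _ \<le> 1 / 2\<close> C1_pos that
    by (intro nn_integral_exp_finite_of_reverse_moment) (simp_all add: mu2V_def mult_ac)
  then have "(\<integral>\<^sup>+x. ennreal (exp (2 * a / real DIM('a) * norm x)) \<partial>mu2V V) < \<infinity>"
    using \<open>a > 0\<close> by (intro nn_integral_exp_norm_finite_of_directional) (auto simp: mu2V_def mult.assoc)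
  moreover have "2 * a / real DIM('a) > 0"
    using \<open>a > 0\<close> by simp
  ultimately show ?thesis
    by blast
qed

end
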